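(* Let $0<p<1$ and let $X_p$ be a $\mathbb{P}^1(\mathbb{R})$-valued random variable satisfying $X_p \sim \frac{1}{X_p}+\epsilon_p$ with $\epsilon_p\sim\mathrm{Bernoulli}(p)$ independent of $X_p$. Then \[ \mathbb{E}[\log X_p]=\frac{p}{2}\,\mathbb{E}\big[\log(1+X_p)\big]. \]
   Context: $\mathbb{P}^1(\mathbb{R})$ is identified with $\mathbb{R}\cup\{\infty\}$ (with $1/0=\infty$, $1/\infty=0$). $\epsilon_p\sim\mathrm{Bernoulli}(p)$ means $\mathbb{P}(\epsilon_p=1)=p$, $\mathbb{P}(\epsilon_p=0)=1-p$. The law of such $X_p$ is unique, atomless, $X_p\in(0,\infty)$ a.s., and $0<\mathbb{E}[\log X_p]<\infty$. *)

theory Defs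
  imports "HOL-Probability.Probability"
begin

text \<open>The real projective line P^1(R) = R \<union> {\<infinity>}, modelled as \<open>real option\<close>:
  \<open>Some x\<close> is the finite point x, \<open>None\<close> is \<infinity>.\<close>
type_synonym proj = "real option"

text \<open>Borel sigma-algebra on P^1(R): a set is measurable iff its finite part is Borel.\<close>
definition P1 :: "proj measure" where
  "P1 = measure_of UNIV {A. Some -` A \<in> sets borel} (\<lambda>_. 0)"

fun pinv :: "proj \<Rightarrow> proj" where
  "pinv None = Some 0"
| "pinv (Some x) = (if x = 0 then None else Some (1 / x))"

fun padd :: "proj \<Rightarrow> real \<Rightarrow> proj" where
  "padd None e = None"
| "padd (Some x) e = Some (x + e)"

end

theory Submission
  imports Defs
begin

text \<open>Let \<open>\<mu>\<close> be the law of \<open>X\<close>. The fixed-point equation says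
  \<open>\<mu> = (1 - p) \<cdot> pinv\<^sub>*\<mu> + p \<cdot> T\<^sub>*\<mu>\<close> with \<open>T x = 1/x + 1\<close> (\<open>inv_succ\<close>). Comparing the masses of
  \<open>(-\<infinity>, 0)\<close>, \<open>(-1, 0)\<close> and \<open>(-\<infinity>, -1]\<close> shows that \<open>\<mu>\<close> lives on \<open>(0, \<infinity>)\<close>.
  Applying stationarity to \<open>min c x\<close> and \<open>min c (1/x)\<close> gives \<open>E[min c X] \<le> 2\<close> uniformly in \<open>c\<close>,
  so \<open>X\<close> and then \<open>1/X\<close> are integrable. Hence \<open>A = E ln(1 + X)\<close>, \<open>B = E ln(1 + 1/X)\<close>
  and \<open>C = E ln(1 + X/(1 + X))\<close> are finite, and stationarity applied to \<open>ln(1 + x)\<close> and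
  \<open>ln(1 + 1/x)\<close> yields \<open>A = B + pC\<close> and \<open>B = (1 - p)A + pC\<close>. Thus \<open>C = A/2\<close> and
  \<open>E ln X = A - B = pA/2\<close>.\<close>

subsection \<open>The Borel space of the projective line\<close>

lemma sets_P1: "sets P1 = {A. Some -` A \<in> sets borel}"
proof -
  have "sigma_algebra UNIV {A::proj set. Some -` A \<in> sets borel}"
    unfolding sigma_algebra_iff2
  proof (intro conjI ballI allI impI)
    fix s assume "s \<in> {A::proj set. Some -` A \<in> sets borel}"
    then show "UNIV - s \<in> {A::proj set. Some -` A \<in> sets borel}"
      by (simp add: vimage_Diff sets.compl_sets[of borel, simplified])
  next
    fix A :: "nat \<Rightarrow> proj set" assume "range A \<subseteq> {A. Some -` A \<in> sets borel}"
    then show "(\<Union>i. A i) \<in> {A. Some -` A \<in> sets borel}" by (auto simp: vimage_Union)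
  qed auto
  then show ?thesis unfolding P1_def
    by (subst sets_measure_of) (auto simp: sigma_algebra.sigma_sets_eq)
qed

lemma space_P1 [simp]: "space P1 = UNIV"
  unfolding P1_def by (simp add: space_measure_of_conv)

lemma measurable_P1_domain:
  assumes "(\<lambda>x. g (Some x)) \<in> measurable borel N" and "space N = UNIV"
  shows "g \<in> measurable P1 N"
proof (rule measurableI)
  fix B assume "B \<in> sets N"
  then have "(\<lambda>x. g (Some x)) -` B \<inter> space borel \<in> sets borel"
    using assms(1) measurable_sets by blast
  then show "g -` B \<inter> space P1 \<in> sets P1" by (simp add: sets_P1 vimage_def)
qed (use assms in auto)

lemma measurable_P1_codomain:
  assumes "\<And>A. Some -` A \<in> sets borel \<Longrightarrow> f -` A \<inter> space N \<in> sets N"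
  shows "f \<in> measurable N P1"
  by (rule measurableI) (auto simp: sets_P1 assms)

lemma measurable_the_P1: "G \<in> borel_measurable borel \<Longrightarrow> (\<lambda>x. G (the x)) \<in> borel_measurable P1"
  by (rule measurable_P1_domain) auto

lemma Some_image_in_sets_P1: "S \<in> sets borel \<Longrightarrow> Some ` S \<in> sets P1"
  by (auto simp: sets_P1 inj_vimage_image_eq)

lemma None_in_sets_P1: "{None} \<in> sets P1"
  by (simp add: sets_P1 vimage_def)

lemma measurable_pinv: "pinv \<in> measurable P1 P1"
proof (rule measurable_P1_domain[OF measurable_P1_codomain])
  fix A :: "proj set" assume A: "Some -` A \<in> sets borel"
  have "(\<lambda>x::real. 1 / x) \<in> borel_measurable borel" by measurable
  from measurable_sets[OF this A]
  have "{x::real. x \<noteq> 0} \<inter> (\<lambda>x. 1 / x) -` Some -` A \<in> sets borel" by auto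
  moreover have "(\<lambda>x. pinv (Some x)) -` A =
      (if None \<in> A then {0} else {}) \<union> ({x. x \<noteq> 0} \<inter> (\<lambda>x. 1 / x) -` Some -` A)"
    by (auto split: if_splits)
  ultimately show "(\<lambda>x. pinv (Some x)) -` A \<inter> space borel \<in> sets borel" by auto
qed simp

lemma measurable_padd: "(\<lambda>x. padd x e) \<in> measurable P1 P1"
proof (rule measurable_P1_domain[OF measurable_P1_codomain])
  fix A :: "proj set" assume "Some -` A \<in> sets borel"
  moreover have "(\<lambda>x::real. x + e) \<in> borel_measurable borel" by measurable
  ultimately have "(\<lambda>x. x + e) -` Some -` A \<inter> space borel \<in> sets borel"
    by (rule measurable_sets[rotated])
  then show "(\<lambda>x. padd (Some x) e) -` A \<inter> space borel \<in> sets borel"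
    by (simp add: vimage_def)
qed simp

definition inv_succ :: "proj \<Rightarrow> proj" where
  "inv_succ x = padd (pinv x) 1"

lemma measurable_inv_succ: "inv_succ \<in> measurable P1 P1"
  unfolding inv_succ_def using measurable_comp[OF measurable_pinv measurable_padd]
  by (simp add: o_def)

lemma vimage_pinv_negative: "pinv -` Some ` {..<0} = Some ` {..<0}"
proof (rule set_eqI)
  fix x :: proj show "x \<in> pinv -` Some ` {..<0} \<longleftrightarrow> x \<in> Some ` {..<0}"
    by (cases x) (auto simp: image_iff)
qed

lemma vimage_inv_succ_negative: "inv_succ -` Some ` {..<0} = Some ` {-1<..<0}"
proof (rule set_eqI)
  fix x :: proj show "x \<in> inv_succ -` Some ` {..<0} \<longleftrightarrow> x \<in> Some ` {-1<..<0}"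
  proof (cases x)
    case (Some y)
    have "y \<noteq> 0 \<and> 1 / y + 1 < 0 \<longleftrightarrow> -1 < y \<and> y < 0"
      by (cases "y < 0") (auto simp: field_simps not_less)
    then show ?thesis using Some by (auto simp: image_iff inv_succ_def)
  qed (auto simp: image_iff inv_succ_def)
qed

lemma vimage_pinv_atMost_minus_one: "pinv -` Some ` {..-1} = Some ` {-1..<0}"
proof (rule set_eqI)
  fix x :: proj show "x \<in> pinv -` Some ` {..-1} \<longleftrightarrow> x \<in> Some ` {-1..<0}"
  proof (cases x)
    case (Some y)
    have "y \<noteq> 0 \<and> 1 / y \<le> -1 \<longleftrightarrow> -1 \<le> y \<and> y < 0"
      by (cases "y < 0") (auto simp: field_simps not_less)
    then show ?thesis using Some by (auto simp: image_iff)
  qed (auto simp: image_iff)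
qed

lemma vimage_singletons:
  "pinv -` {None} = {Some 0}" "pinv -` {Some 0} = {None}"
  "inv_succ -` {None} = {Some 0}" "inv_succ -` {Some 0} = {Some (-1)}"
  by (intro set_eqI; case_tac x; auto simp: inv_succ_def field_simps split: if_splits)+

lemma SUP_min_real_ennreal: "(SUP n::nat. ennreal (min (real n) t)) = ennreal t"
proof (rule antisym)
  show "(SUP n::nat. ennreal (min (real n) t)) \<le> ennreal t"
    by (rule SUP_least) (simp add: ennreal_leI)
  obtain n :: nat where "t \<le> real n" using real_arch_simple by blast
  then have "ennreal t = ennreal (min (real n) t)" by simp
  also have "\<dots> \<le> (SUP n::nat. ennreal (min (real n) t))" by (rule SUP_upper) simp
  finally show "ennreal t \<le> (SUP n::nat. ennreal (min (real n) t))" .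
qed

lemma ln_eq_diff_ln_one_plus: "0 < (u::real) \<Longrightarrow> ln u = ln (1 + u) - ln (1 + 1 / u)"
proof -
  assume u: "0 < u"
  then have "ln (u * (1 + 1 / u)) = ln u + ln (1 + 1 / u)" by (intro ln_mult_pos) (simp_all add: add_pos_pos)
  moreover have "u * (1 + 1 / u) = 1 + u" using u by (simp add: field_simps)
  ultimately show ?thesis by simp
qed

lemma ln_one_plus_inv_succ:
  "0 < (u::real) \<Longrightarrow> ln (1 + (1 / u + 1)) = ln (1 + 1 / u) + ln (1 + 1 / (1 / u + 1))"
proof -
  assume "0 < u"
  then have w: "0 < 1 / u" by simp
  then have "ln ((1 + 1 / u) * (1 + 1 / (1 / u + 1))) = ln (1 + 1 / u) + ln (1 + 1 / (1 / u + 1))"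
    by (intro ln_mult_pos) (simp_all add: add_pos_pos)
  moreover have "(1 + w) * (1 + 1 / (w + 1)) = 1 + (w + 1)" if "0 < w" for w :: real
    using that by (simp add: field_simps)
  ultimately show ?thesis using w by simp
qed

subsection \<open>Stationary laws\<close>

lemma padd_pinv_zero_one:
  "e \<in> {0, 1} \<Longrightarrow> padd (pinv x) e = (if e = 1 then inv_succ x else pinv x)"
  by (cases "pinv x") (auto simp: inv_succ_def)

locale stationary_law = prob_space mu for mu :: "proj measure" +
  fixes p :: real
  assumes p_pos: "0 < p" and p_less_1: "p < 1"
    and sets_eq: "sets mu = sets P1"
    and prob_stationary:
      "S \<in> sets P1 \<Longrightarrow> prob S = (1 - p) * prob (pinv -` S) + p * prob (inv_succ -` S)"

lemma stationary_law_distr: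
  fixes M :: "'a measure" and X :: "'a \<Rightarrow> proj" and eps :: "'a \<Rightarrow> real"
  assumes M: "prob_space M" and p: "0 < p" "p < 1"
    and X: "X \<in> measurable M P1" and eps: "eps \<in> borel_measurable M"
    and eps_01: "\<forall>\<omega>\<in>space M. eps \<omega> \<in> {0, 1}"
    and prob_eps: "measure M {\<omega>\<in>space M. eps \<omega> = 1} = p"
    and indep: "\<forall>A\<in>sets P1. \<forall>B\<in>sets (borel :: real measure).
         measure M ({\<omega>\<in>space M. X \<omega> \<in> A} \<inter> {\<omega>\<in>space M. eps \<omega> \<in> B})
         = measure M {\<omega>\<in>space M. X \<omega> \<in> A} * measure M {\<omega>\<in>space M. eps \<omega> \<in> B}"
    and law: "distr M P1 X = distr M P1 (\<lambda>\<omega>. padd (pinv (X \<omega>)) (eps \<omega>))"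
  shows "stationary_law (distr M P1 X) p"
proof -
  interpret prob_space M by (fact M)
  let ?Y = "\<lambda>\<omega>. padd (pinv (X \<omega>)) (eps \<omega>)"
  let ?X_in = "\<lambda>A. {\<omega>\<in>space M. X \<omega> \<in> A}" and ?eps_in = "\<lambda>B. {\<omega>\<in>space M. eps \<omega> \<in> B}"
  have X_in: "?X_in A \<in> sets M" if "A \<in> sets P1" for A
    using measurable_sets[OF X that] by (simp add: vimage_def Int_def conj_commute)
  have eps_in: "?eps_in B \<in> sets M" if "B \<in> sets borel" for B
    using measurable_sets[OF eps that] by (simp add: vimage_def Int_def conj_commute)
  have "{\<omega>\<in>space M. eps \<omega> = 0} = space M - ?eps_in {1}" using eps_01 by auto
  then have prob_eps_0: "prob {\<omega>\<in>space M. eps \<omega> = 0} = 1 - p"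
    using prob_compl[OF eps_in[of "{1}"]] prob_eps by simp
  have Y: "?Y \<in> measurable M P1"
  proof (rule measurable_cong[THEN iffD1])
    show "(\<lambda>\<omega>. if eps \<omega> = 1 then inv_succ (X \<omega>) else pinv (X \<omega>)) \<in> measurable M P1"
      using X eps by (intro measurable_If measurable_compose[OF X] measurable_inv_succ
          measurable_pinv) measurable
  qed (use eps_01 padd_pinv_zero_one in auto)
  have law_prob: "measure (distr M P1 X) A = prob (?X_in A)" if "A \<in> sets P1" for A
    using measure_distr[OF X that] by (simp add: vimage_def Int_def conj_commute)
  show ?thesis
  proof (intro stationary_law.intro stationary_law_axioms.intro)
    fix S :: "proj set" assume S: "S \<in> sets P1"
    have S_pinv: "pinv -` S \<in> sets P1" and S_inv_succ: "inv_succ -` S \<in> sets P1"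
      using measurable_sets[OF measurable_pinv S] measurable_sets[OF measurable_inv_succ S] by simp_all
    have "measure (distr M P1 X) S = prob (?Y -` S \<inter> space M)"
      unfolding law by (rule measure_distr[OF Y S])
    also have "?Y -` S \<inter> space M =
        (?X_in (pinv -` S) \<inter> ?eps_in {0}) \<union> (?X_in (inv_succ -` S) \<inter> ?eps_in {1})"
      using eps_01 padd_pinv_zero_one by auto
    also have "prob \<dots> = prob (?X_in (pinv -` S) \<inter> ?eps_in {0}) + prob (?X_in (inv_succ -` S) \<inter> ?eps_in {1})"
      by (rule finite_measure_Union; (intro sets.Int X_in eps_in S_pinv S_inv_succ)?) auto
    finally have "measure (distr M P1 X) S =
        prob (?X_in (pinv -` S) \<inter> ?eps_in {0}) + prob (?X_in (inv_succ -` S) \<inter> ?eps_in {1})" .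
    then show "measure (distr M P1 X) S = (1 - p) * measure (distr M P1 X) (pinv -` S)
        + p * measure (distr M P1 X) (inv_succ -` S)"
      using indep[rule_format, OF S_pinv, of "{0}"] indep[rule_format, OF S_inv_succ, of "{1}"]
      by (simp add: law_prob[OF S_pinv] law_prob[OF S_inv_succ] prob_eps_0 prob_eps)
  qed (use p prob_space_distr[OF X] in simp_all)
qed

context stationary_law
begin

lemma space_eq [simp]: "space mu = UNIV"
  using sets_eq_imp_space_eq[OF sets_eq] by simp

lemma Some_image_in_events: "S \<in> sets borel \<Longrightarrow> Some ` S \<in> events"
  by (simp add: sets_eq Some_image_in_sets_P1)

lemma prob_negative: "prob (Some ` {..<0}) = 0"
proof -
  let ?N = "Some ` {..<0::real}" and ?N1 = "Some ` {-1<..<0::real}"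
    and ?N2 = "Some ` {..-1::real}" and ?N3 = "Some ` {-1..<0::real}"
  have "prob ?N = (1 - p) * prob ?N + p * prob ?N1"
    using prob_stationary[OF Some_image_in_sets_P1[of "{..<0}"]]
    by (simp add: vimage_pinv_negative vimage_inv_succ_negative)
  then have "prob ?N1 = prob ?N" using p_pos by (simp add: algebra_simps)
  moreover have "?N = ?N1 \<union> ?N2" by (auto simp: image_iff not_le)
  then have "prob ?N = prob ?N1 + prob ?N2"
    by (simp only:) (rule finite_measure_Union; auto intro: Some_image_in_events)
  ultimately have N2: "prob ?N2 = 0" by simp
  moreover have "prob ?N2 = (1 - p) * prob ?N3 + p * prob (inv_succ -` ?N2)"
    using prob_stationary[OF Some_image_in_sets_P1[of "{..-1}"]]
    by (simp add: vimage_pinv_atMost_minus_one)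
  ultimately have "prob ?N3 = 0"
    using p_pos p_less_1 measure_nonneg[of mu ?N3] measure_nonneg[of mu "inv_succ -` ?N2"]
    by (smt (verit) mult_nonneg_nonneg mult_pos_pos)
  moreover have "?N = ?N2 \<union> ?N3" by (auto simp: image_iff)
  then have "prob ?N \<le> prob ?N2 + prob ?N3"
    using measure_subadditive[of ?N2 mu ?N3] by (simp add: Some_image_in_events)
  ultimately show ?thesis using N2 measure_nonneg[of mu ?N] by linarith
qed

lemma prob_zero_infinity: "prob {Some 0} = 0" "prob {None} = 0"
proof -
  have "prob {Some (-1)} \<le> prob (Some ` {..<0})"
    by (rule finite_measure_mono) (auto intro!: Some_image_in_events)
  then have "prob {Some (-1)} = 0" using prob_negative measure_nonneg[of mu "{Some (-1)}"] by linarith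
  moreover have "prob {Some 0} = (1 - p) * prob {None} + p * prob {Some (-1)}"
    using prob_stationary[OF Some_image_in_sets_P1[of "{0}"]] by (simp add: vimage_singletons)
  moreover have "prob {None} = (1 - p) * prob {Some 0} + p * prob {Some 0}"
    using prob_stationary[OF None_in_sets_P1] by (simp add: vimage_singletons)
  ultimately show "prob {Some 0} = 0" "prob {None} = 0"
    using p_pos by (auto simp: algebra_simps)
qed

lemma AE_positive: "AE x in mu. x \<in> Some ` {0<..}"
proof -
  have "AE x in mu. x \<notin> Some ` {..<0}"
    using prob_negative by (subst (asm) prob_eq_0) (auto intro: Some_image_in_events)
  moreover have "AE x in mu. x \<notin> {Some 0}"
    using prob_zero_infinity(1) Some_image_in_events[of "{0}"] by (subst (asm) prob_eq_0) auto
  moreover have "AE x in mu. x \<notin> {None}"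
    using prob_zero_infinity(2) None_in_sets_P1 by (subst (asm) prob_eq_0) (auto simp: sets_eq)
  ultimately show ?thesis
  proof eventually_elim
    case (elim x)
    then show ?case by (cases x) (auto simp: image_iff linorder_neq_iff)
  qed
qed

lemma AE_the_pos: "AE x in mu. 0 < the x"
  using AE_positive by eventually_elim auto

lemma measurable_pinv_mu: "pinv \<in> measurable mu mu"
  and measurable_inv_succ_mu: "inv_succ \<in> measurable mu mu"
  using measurable_pinv measurable_inv_succ by (simp_all add: measurable_cong_sets[OF sets_eq sets_eq])

lemma borel_measurable_the: "G \<in> borel_measurable borel \<Longrightarrow> (\<lambda>x. G (the x)) \<in> borel_measurable mu"
  using measurable_the_P1 by (simp add: measurable_cong_sets[OF sets_eq refl])

lemma emeasure_stationary:
  assumes "A \<in> events"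
  shows "emeasure mu A = ennreal (1 - p) * emeasure mu (pinv -` A) + ennreal p * emeasure mu (inv_succ -` A)"
proof -
  have "emeasure mu A = ennreal ((1 - p) * prob (pinv -` A) + p * prob (inv_succ -` A))"
    using prob_stationary assms by (simp add: emeasure_eq_measure sets_eq)
  also have "\<dots> = ennreal (1 - p) * ennreal (prob (pinv -` A)) + ennreal p * ennreal (prob (inv_succ -` A))"
    using p_pos p_less_1 by (simp add: ennreal_plus ennreal_mult)
  finally show ?thesis by (simp add: emeasure_eq_measure)
qed

lemma nn_integral_stationary:
  assumes "g \<in> borel_measurable mu"
  shows "(\<integral>\<^sup>+x. g x \<partial>mu) = ennreal (1 - p) * (\<integral>\<^sup>+x. g (pinv x) \<partial>mu) + ennreal p * (\<integral>\<^sup>+x. g (inv_succ x) \<partial>mu)"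
  using assms
proof (induction rule: borel_measurable_induct)
  case (set A)
  have "(\<integral>\<^sup>+x. indicator A (h x) \<partial>mu) = emeasure mu (h -` A)" if "h \<in> measurable mu mu" for h
    using nn_integral_indicator[OF measurable_sets[OF that set]] by (simp add: indicator_vimage[symmetric])
  then show ?case
    using emeasure_stationary[OF set] measurable_pinv_mu measurable_inv_succ_mu by simp
next
  case (mult u c)
  then show ?case
    using measurable_compose[OF measurable_pinv_mu \<open>u \<in> borel_measurable mu\<close>]
      measurable_compose[OF measurable_inv_succ_mu \<open>u \<in> borel_measurable mu\<close>]
    by (simp add: nn_integral_cmult distrib_left mult.left_commute)
next
  case (add u v)
  then show ?case
    using measurable_compose[OF measurable_pinv_mu \<open>u \<in> borel_measurable mu\<close>]
      measurable_compose[OF measurable_inv_succ_mu \<open>u \<in> borel_measurable mu\<close>]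
      measurable_compose[OF measurable_pinv_mu \<open>v \<in> borel_measurable mu\<close>]
      measurable_compose[OF measurable_inv_succ_mu \<open>v \<in> borel_measurable mu\<close>]
    by (simp add: nn_integral_add distrib_left ac_simps)
next
  case (seq U)
  have U_comp: "(\<lambda>x. U i (h x)) \<in> borel_measurable mu" if "h \<in> measurable mu mu" for i and h :: "proj \<Rightarrow> proj"
    using measurable_compose[OF that \<open>U i \<in> borel_measurable mu\<close>] .
  have inc_comp: "incseq (\<lambda>i x. U i (h x))" for h
    using \<open>incseq U\<close> by (auto simp: incseq_def le_fun_def)
  have SUP_comp: "(\<integral>\<^sup>+x. (SUP i. U i) (h x) \<partial>mu) = (SUP i. \<integral>\<^sup>+x. U i (h x) \<partial>mu)"
    if "h \<in> measurable mu mu" for h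
    using nn_integral_monotone_convergence_SUP[OF inc_comp U_comp[OF that]] by (simp add: image_comp)
  have "incseq (\<lambda>i. ennreal c * (\<integral>\<^sup>+x. U i (h x) \<partial>mu))" for c h
    using inc_comp[of h] by (auto simp: incseq_def le_fun_def intro!: mult_left_mono nn_integral_mono)
  then show ?case
    using SUP_comp[of id] SUP_comp[OF measurable_pinv_mu] SUP_comp[OF measurable_inv_succ_mu] seq.IH
    by (simp add: SUP_mult_left_ennreal ennreal_SUP_add)
qed simp_all

lemma integral_the_cong:
  assumes "F \<in> borel_measurable borel" "G \<in> borel_measurable borel" "\<And>u. 0 < u \<Longrightarrow> F u = G u"
  shows "(\<integral>x. F (the x) \<partial>mu) = (\<integral>x. G (the x) \<partial>mu)"
    and "integrable mu (\<lambda>x. F (the x)) \<longleftrightarrow> integrable mu (\<lambda>x. G (the x))"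
proof -
  have "AE x in mu. F (the x) = G (the x)"
    using AE_the_pos by eventually_elim (use assms(3) in blast)
  then show "(\<integral>x. F (the x) \<partial>mu) = (\<integral>x. G (the x) \<partial>mu)"
    and "integrable mu (\<lambda>x. F (the x)) \<longleftrightarrow> integrable mu (\<lambda>x. G (the x))"
    using assms(1,2) by (simp_all add: borel_measurable_the integral_cong_AE integrable_cong_AE)
qed

lemma integrable_the_bounded:
  fixes G :: "real \<Rightarrow> real"
  assumes "G \<in> borel_measurable borel" "\<And>u. 0 < u \<Longrightarrow> \<bar>G u\<bar> \<le> B"
  shows "integrable mu (\<lambda>x. G (the x))"
proof (rule integrable_const_bound)
  show "AE x in mu. norm (G (the x)) \<le> B"
    using AE_the_pos by eventually_elim (simp add: assms(2))
qed (rule borel_measurable_the[OF assms(1)])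

lemma integrable_the_dominated:
  fixes G H :: "real \<Rightarrow> real"
  assumes "G \<in> borel_measurable borel" "integrable mu (\<lambda>x. H (the x))"
    and "\<And>u. 0 < u \<Longrightarrow> \<bar>G u\<bar> \<le> H u"
  shows "integrable mu (\<lambda>x. G (the x))"
proof (rule Bochner_Integration.integrable_bound[OF assms(2)])
  show "AE x in mu. norm (G (the x)) \<le> norm (H (the x))"
    using AE_the_pos by eventually_elim (use assms(3) in force)
qed (rule borel_measurable_the[OF assms(1)])

lemma nn_integral_stationary_the:
  assumes "G \<in> borel_measurable borel"
  shows "(\<integral>\<^sup>+x. ennreal (G (the x)) \<partial>mu) = ennreal (1 - p) * (\<integral>\<^sup>+x. ennreal (G (1 / the x)) \<partial>mu)
     + ennreal p * (\<integral>\<^sup>+x. ennreal (G (1 / the x + 1)) \<partial>mu)"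
proof -
  have "(\<integral>\<^sup>+x. ennreal (G (the (pinv x))) \<partial>mu) = (\<integral>\<^sup>+x. ennreal (G (1 / the x)) \<partial>mu)"
    and "(\<integral>\<^sup>+x. ennreal (G (the (inv_succ x))) \<partial>mu) = (\<integral>\<^sup>+x. ennreal (G (1 / the x + 1)) \<partial>mu)"
    by (intro nn_integral_cong_AE; use AE_positive in \<open>eventually_elim, force simp: inv_succ_def\<close>)+
  moreover have "(\<lambda>x. ennreal (G (the x))) \<in> borel_measurable mu"
    using borel_measurable_the[OF assms] by simp
  ultimately show ?thesis
    using nn_integral_stationary by simp
qed

lemma integral_stationary_the:
  fixes G :: "real \<Rightarrow> real"
  assumes G: "G \<in> borel_measurable borel" and G_nonneg: "\<And>u. 0 < u \<Longrightarrow> 0 \<le> G u"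
    and int: "integrable mu (\<lambda>x. G (the x))" "integrable mu (\<lambda>x. G (1 / the x))"
      "integrable mu (\<lambda>x. G (1 / the x + 1))"
  shows "(\<integral>x. G (the x) \<partial>mu) = (1 - p) * (\<integral>x. G (1 / the x) \<partial>mu) + p * (\<integral>x. G (1 / the x + 1) \<partial>mu)"
proof -
  have nonneg: "AE x in mu. 0 \<le> G (the x)" "AE x in mu. 0 \<le> G (1 / the x)"
    "AE x in mu. 0 \<le> G (1 / the x + 1)"
    using AE_the_pos by (eventually_elim, simp add: G_nonneg add_pos_pos)+
  then have "0 \<le> (\<integral>x. G (1 / the x) \<partial>mu)" "0 \<le> (\<integral>x. G (1 / the x + 1) \<partial>mu)"
    by (simp_all add: integral_nonneg_AE)
  moreover have "ennreal (\<integral>x. G (the x) \<partial>mu) = ennreal (1 - p) * ennreal (\<integral>x. G (1 / the x) \<partial>mu)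
      + ennreal p * ennreal (\<integral>x. G (1 / the x + 1) \<partial>mu)"
    using nn_integral_stationary_the[OF G] by (simp add: nn_integral_eq_integral int nonneg)
  ultimately show ?thesis
    using p_pos p_less_1 integral_nonneg_AE[OF nonneg(1)]
    by (simp add: ennreal_mult[symmetric] ennreal_plus[symmetric] del: ennreal_plus)
qed

subsection \<open>Integrability and the logarithmic identity\<close>

lemma integral_min_the_le_2:
  assumes "0 \<le> c"
  shows "(\<integral>x. min c (the x) \<partial>mu) \<le> 2"
proof -
  have int_min: "integrable mu (\<lambda>x. min c (F (the x)))"
    if F: "F \<in> borel_measurable borel" and F_pos: "\<And>u. 0 < u \<Longrightarrow> 0 < F u" for F :: "real \<Rightarrow> real"
  proof (rule integrable_the_bounded[where B=c])
    show "\<bar>min c (F u)\<bar> \<le> c" if "0 < u" for u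
      using F_pos[OF that] assms by (auto simp: min_def)
  qed (use F in measurable)
  have int: "integrable mu (\<lambda>x. min c (the x))" "integrable mu (\<lambda>x. min c (1 / the x))"
    "integrable mu (\<lambda>x. min c (1 / the x + 1))" "integrable mu (\<lambda>x. min c (1 / (1 / the x + 1)))"
    by (intro int_min; simp add: add_pos_pos)+
  define a where "a = (\<integral>x. min c (the x) \<partial>mu)"
  define b where "b = (\<integral>x. min c (1 / the x) \<partial>mu)"
  define S where "S = (\<integral>x. min c (1 / the x + 1) \<partial>mu)"
  define R where "R = (\<integral>x. min c (1 / (1 / the x + 1)) \<partial>mu)"
  have "a = (1 - p) * b + p * S"
    unfolding a_def b_def S_def using int assms by (intro integral_stationary_the) auto
  moreover have "S \<le> b + 1"
  proof -
    have "S \<le> (\<integral>x. min c (1 / the x) + 1 \<partial>mu)"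
      unfolding S_def using int by (intro integral_mono) auto
    then show ?thesis unfolding b_def using int(2) prob_space by simp
  qed
  ultimately have "a \<le> b + p"
    using p_pos mult_left_mono[of S "b + 1" p] by (simp add: algebra_simps)
  have "b = (1 - p) * a + p * R"
    using integral_stationary_the[of "\<lambda>u. min c (1 / u)"] int assms
    unfolding a_def b_def R_def by simp
  moreover have "R \<le> 1"
  proof -
    have "R \<le> (\<integral>x. 1 \<partial>mu)"
      unfolding R_def
    proof (rule integral_mono_AE[OF int(4)])
      show "AE x in mu. min c (1 / (1 / the x + 1)) \<le> 1"
        using AE_the_pos by eventually_elim (simp add: min.coboundedI2 add_pos_pos)
    qed simp
    then show ?thesis using prob_space by simp
  qed
  ultimately have "b \<le> a - p * a + p"
    using p_pos mult_left_mono[of R 1 p] by (simp add: algebra_simps)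
  with \<open>a \<le> b + p\<close> have "p * a \<le> p * 2" by linarith
  then show ?thesis unfolding a_def using p_pos by simp
qed

lemma integrable_the: "integrable mu (\<lambda>x. the x)"
proof (rule integrableI_nonneg)
  show "(\<lambda>x. the x) \<in> borel_measurable mu" by (rule borel_measurable_the) simp
  show "AE x in mu. 0 \<le> the x" using AE_the_pos by eventually_elim simp
  have "(\<integral>\<^sup>+x. ennreal (the x) \<partial>mu) = (\<integral>\<^sup>+x. (SUP n::nat. ennreal (min (real n) (the x))) \<partial>mu)"
    by (simp add: SUP_min_real_ennreal)
  also have "\<dots> = (SUP n::nat. \<integral>\<^sup>+x. ennreal (min (real n) (the x)) \<partial>mu)"
    by (rule nn_integral_monotone_convergence_SUP)
       (auto simp: incseq_def le_fun_def intro!: ennreal_leI borel_measurable_the)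
  also have "\<dots> \<le> ennreal 2"
  proof (rule SUP_least)
    fix n :: nat
    have "integrable mu (\<lambda>x. min (real n) (the x))"
      by (rule integrable_the_bounded[where B="real n"]) auto
    moreover have "AE x in mu. 0 \<le> min (real n) (the x)"
      using AE_the_pos by eventually_elim simp
    ultimately show "(\<integral>\<^sup>+x. ennreal (min (real n) (the x)) \<partial>mu) \<le> ennreal 2"
      using ennreal_leI[OF integral_min_the_le_2[of "real n"]] by (simp add: nn_integral_eq_integral)
  qed
  finally show "(\<integral>\<^sup>+x. ennreal (the x) \<partial>mu) < \<infinity>" by (simp add: le_less_trans)
qed

lemma integrable_inverse_the: "integrable mu (\<lambda>x. 1 / the x)"
proof (rule integrableI_nonneg)
  show "(\<lambda>x. 1 / the x) \<in> borel_measurable mu" by (rule borel_measurable_the) simp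
  show "AE x in mu. 0 \<le> 1 / the x" using AE_the_pos by eventually_elim simp
  have "integrable mu (\<lambda>x. 1 / (1 / the x + 1))"
    by (rule integrable_the_bounded[where B=1]) (auto simp: add_pos_pos)
  then have "(\<integral>\<^sup>+x. ennreal (1 / (1 / the x + 1)) \<partial>mu) < \<infinity>"
    using AE_the_pos by (subst nn_integral_eq_integral) (auto elim!: eventually_mono simp: add_pos_pos)
  moreover have "(\<integral>\<^sup>+x. ennreal (the x) \<partial>mu) < \<infinity>"
    using integrable_the AE_the_pos by (subst nn_integral_eq_integral) (auto elim!: eventually_mono)
  moreover have "(\<integral>\<^sup>+x. ennreal (1 / the x) \<partial>mu) = ennreal (1 - p) * (\<integral>\<^sup>+x. ennreal (the x) \<partial>mu)
     + ennreal p * (\<integral>\<^sup>+x. ennreal (1 / (1 / the x + 1)) \<partial>mu)"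
    using nn_integral_stationary_the[of "\<lambda>u. 1 / u"] by simp
  ultimately show "(\<integral>\<^sup>+x. ennreal (1 / the x) \<partial>mu) < \<infinity>"
    by (simp add: ennreal_mult_less_top)
qed

lemma integral_ln_the:
  "integrable mu (\<lambda>x. ln (the x)) \<and> integrable mu (\<lambda>x. ln (1 + the x))
   \<and> (\<integral>x. ln (the x) \<partial>mu) = p / 2 * (\<integral>x. ln (1 + the x) \<partial>mu)"
proof -
  have int_A: "integrable mu (\<lambda>x. ln (1 + the x))"
    by (rule integrable_the_dominated[OF _ integrable_the]) (auto intro: ln_add_one_self_le_self)
  have int_B: "integrable mu (\<lambda>x. ln (1 + 1 / the x))"
    by (rule integrable_the_dominated[OF _ integrable_inverse_the]) (auto intro: ln_add_one_self_le_self)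
  have int_C: "integrable mu (\<lambda>x. ln (1 + 1 / (1 / the x + 1)))"
  proof (rule integrable_the_bounded[where B=1])
    show "\<bar>ln (1 + 1 / (1 / u + 1))\<bar> \<le> 1" if "0 < u" for u :: real
    proof -
      have pos: "0 < 1 / (1 / u + 1)" and le: "1 / (1 / u + 1) \<le> 1"
        using that by (simp_all add: add_pos_pos)
      have "0 \<le> ln (1 + 1 / (1 / u + 1))" using pos by simp
      then show ?thesis using ln_add_one_self_le_self[OF less_imp_le[OF pos]] le by linarith
    qed
  qed measurable
  note shift = integral_the_cong[where F="\<lambda>u. ln (1 + (1 / u + 1))"
      and G="\<lambda>u. ln (1 + 1 / u) + ln (1 + 1 / (1 / u + 1))", OF _ _ ln_one_plus_inv_succ]
  note split_ln = integral_the_cong[where F=ln and G="\<lambda>u. ln (1 + u) - ln (1 + 1 / u)",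
      OF _ _ ln_eq_diff_ln_one_plus]
  define A where "A = (\<integral>x. ln (1 + the x) \<partial>mu)"
  define B where "B = (\<integral>x. ln (1 + 1 / the x) \<partial>mu)"
  define C where "C = (\<integral>x. ln (1 + 1 / (1 / the x + 1)) \<partial>mu)"
  have "A = (1 - p) * B + p * (B + C)"
    using integral_stationary_the[of "\<lambda>u. ln (1 + u)"] int_A int_B int_C shift
    unfolding A_def B_def C_def by simp
  moreover have "B = (1 - p) * A + p * C"
    using integral_stationary_the[of "\<lambda>u. ln (1 + 1 / u)"] int_A int_B int_C
    unfolding A_def B_def C_def by simp
  moreover have "(\<integral>x. ln (the x) \<partial>mu) = A - B"
    using split_ln int_A int_B unfolding A_def B_def by simp
  ultimately have "(\<integral>x. ln (the x) \<partial>mu) = p / 2 * A"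
    by (auto simp: algebra_simps)
  moreover have "integrable mu (\<lambda>x. ln (the x))"
    using split_ln int_A int_B by simp
  ultimately show ?thesis using int_A unfolding A_def by blast
qed

end

theorem mainTheorem2:
  fixes M :: "'a measure" and X :: "'a \<Rightarrow> proj" and eps :: "'a \<Rightarrow> real" and p :: real
  assumes "prob_space M"
    and "0 < p" and "p < 1"
    and "X \<in> measurable M P1"
    and "eps \<in> borel_measurable M"
    and "\<forall>\<omega>\<in>space M. eps \<omega> \<in> {0, 1}"
    and "measure M {\<omega>\<in>space M. eps \<omega> = 1} = p"
    and "\<forall>A\<in>sets P1. \<forall>B\<in>sets (borel :: real measure).
         measure M ({\<omega>\<in>space M. X \<omega> \<in> A} \<inter> {\<omega>\<in>space M. eps \<omega> \<in> B})
         = measure M {\<omega>\<in>space M. X \<omega> \<in> A} * measure M {\<omega>\<in>space M. eps \<omega> \<in> B}"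
    and "distr M P1 X = distr M P1 (\<lambda>\<omega>. padd (pinv (X \<omega>)) (eps \<omega>))"
  shows "integrable M (\<lambda>\<omega>. ln (the (X \<omega>)))
    \<and> integrable M (\<lambda>\<omega>. ln (1 + the (X \<omega>)))
    \<and> (\<integral>\<omega>. ln (the (X \<omega>)) \<partial>M) = p / 2 * (\<integral>\<omega>. ln (1 + the (X \<omega>)) \<partial>M)"
proof -
  interpret stationary_law "distr M P1 X" p
    using stationary_law_distr assms by blast
  have "(\<lambda>x. ln (the x)) \<in> borel_measurable P1" "(\<lambda>x. ln (1 + the x)) \<in> borel_measurable P1"
    by (intro measurable_the_P1; measurable)+
  then show ?thesis
    using integral_ln_the assms(4) by (simp add: integrable_distr_eq integral_distr)
qed

end
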